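(* Let $\mathcal L$ be a complete residuated lattice satisfying, for all $x\in L$ and all families $\{y_i\}_{i\in I}\subseteq L$, $$x\vee\bigwedge_{i\in I}y_i=\bigwedge_{i\in I}(x\vee y_i),\qquad x\otimes\bigwedge_{i\in I}y_i=\bigwedge_{i\in I}(x\otimes y_i).$$ Let $\mathcal A=(A,\delta^A,\sigma^A,\tau^A)$ and $\mathcal B=(B,\delta^B,\sigma^B,\tau^B)$ be fuzzy automata over $\mathcal L$ and $X$, let $w\in\{fs,bs,fb,bb,fbb,bfb\}$, let $\varphi_1=\psi^w$, $\varphi_{k+1}=\varphi_k\wedge\phi^w(\varphi_k)$ for $k\in\mathbb N$, and let $\varphi=\bigwedge_{k\in\mathbb N}\varphi_k$. Then: (a) $\varphi$ is the greatest fuzzy relation in $\mathcal R(A,B)$ satisfying $(w\text{-}2)$ and $(w\text{-}3)$; (b) if $\varphi$ satisfies $(w\text{-}1)$, then it is the greatest fuzzy relation in $\mathcal R(A,B)$ satisfying $(w\text{-}1)$, $(w\text{-}2)$ and $(w\text{-}3)$; (c) if $\varphi$ does not satisfy $(w\text{-}1)$, then no fuzzy relation in $\mathcal R(A,B)$ satisfies $(w\text{-}1)$, $(w\text{-}2)$ and $(w\text{-}3)$.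
   Context: A complete residuated lattice $\mathcal L=(L,\wedge,\vee,\otimes,\to,0,1)$: $(L,\wedge,\vee,0,1)$ is a complete lattice with least element $0$ and greatest element $1$, $(L,\otimes,1)$ is a commutative monoid, and $x\otimes y\le z\iff x\le y\to z$. For nonempty sets $A,B$, $\mathcal R(A,B)$ denotes the set of fuzzy relations $A\times B\to L$, ordered pointwise, with pointwise (arbitrary) meets $\wedge$ and joins; $L^A$ denotes functions $A\to L$. Converse: $\varphi^{-1}(b,a)=\varphi(a,b)$. Compositions: $(\varphi\circ\psi)(a,c)=\bigvee_{b}\varphi(a,b)\otimes\psi(b,c)$; for $f\in L^A$, $g\in L^B$, $\varphi\in\mathcal R(A,B)$: $(f\circ\varphi)(b)=\bigvee_{a}f(a)\otimes\varphi(a,b)$, $(\varphi\circ g)(a)=\bigvee_{b}\varphi(a,b)\otimes g(b)$. For $\eta\in L^A,\xi\in L^B$: $(\eta\to\xi)(a,b)=\eta(a)\to\xi(b)$, $(\eta\leftarrow\xi)(a,b)=\xi(b)\to\eta(a)$, $\eta\leftrightarrow\xi=(\eta\to\xi)\wedge(\eta\leftarrow\xi)$. $X$ is a finite nonempty alphabet. A fuzzy automaton $\mathcal A=(A,\delta^A,\sigma^A,\tau^A)$: finite nonempty state set $A$, $\delta^A:A\times X\times A\to L$, $\sigma^A,\tau^A\in L^A$; $\delta^A_x(a,a')=\delta^A(a,x,a')$. Similarly for $\mathcal B$. Conditions on $\varphi\in\mathcal R(A,B)$ (those with $x$ required for all $x\in X$); $(w\text{-}i)$ denotes condition $(i)$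 of type $w$: - $fs$: (1) $\sigma^A\le\sigma^B\circ\varphi^{-1}$; (2) $\varphi^{-1}\circ\delta^A_x\le\delta^B_x\circ\varphi^{-1}$; (3) $\varphi^{-1}\circ\tau^A\le\tau^B$. - $bs$: (1) $\tau^A\le\varphi\circ\tau^B$; (2) $\delta^A_x\circ\varphi\le\varphi\circ\delta^B_x$; (3) $\sigma^A\circ\varphi\le\sigma^B$. - $fb$: (1) $\sigma^A\le\sigma^B\circ\varphi^{-1}$, $\sigma^B\le\sigma^A\circ\varphi$; (2) $\varphi^{-1}\circ\delta^A_x\le\delta^B_x\circ\varphi^{-1}$, $\varphi\circ\delta^B_x\le\delta^A_x\circ\varphi$; (3) $\varphi^{-1}\circ\tau^A\le\tau^B$, $\varphi\circ\tau^B\le\tau^A$. - $bb$: (1) $\tau^A\le\varphi\circ\tau^B$, $\tau^B\le\varphi^{-1}\circ\tau^A$; (2) $\delta^A_x\circ\varphi\le\varphi\circ\delta^B_x$, $\delta^B_x\circ\varphi^{-1}\le\varphi^{-1}\circ\delta^A_x$; (3) $\sigma^A\circ\varphi\le\sigma^B$, $\sigma^B\circ\varphi^{-1}\le\sigma^A$. - $fbb$: (1) $\sigma^A\le\sigma^B\circ\varphi^{-1}$, $\tau^B\le\varphi^{-1}\circ\tau^A$; (2) $\varphi^{-1}\circ\delta^A_x=\delta^B_x\circ\varphi^{-1}$; (3) $\sigma^B\circ\varphi^{-1}\le\sigma^A$, $\varphi^{-1}\circ\tau^A\le\tau^B$. - $bfb$: (1) $\sigma^B\le\sigma^A\circ\varphi$,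 $\tau^A\le\varphi\circ\tau^B$; (2) $\delta^A_x\circ\varphi=\varphi\circ\delta^B_x$; (3) $\sigma^A\circ\varphi\le\sigma^B$, $\varphi\circ\tau^B\le\tau^A$. $\psi^{fs}=\tau^A\to\tau^B$; $\psi^{bs}=\sigma^A\to\sigma^B$; $\psi^{fb}=\tau^A\leftrightarrow\tau^B$; $\psi^{bb}=\sigma^A\leftrightarrow\sigma^B$; $\psi^{fbb}=(\tau^A\to\tau^B)\wedge(\sigma^A\leftarrow\sigma^B)$; $\psi^{bfb}=(\sigma^A\to\sigma^B)\wedge(\tau^A\leftarrow\tau^B)$. For $\alpha\in\mathcal R(A,B)$: $F(\alpha)(a,b)=\bigwedge_{x\in X}\bigwedge_{a'\in A}\big[\delta^A_x(a,a')\to\bigvee_{b'\in B}\delta^B_x(b,b')\otimes\alpha(a',b')\big]$, $F'(\alpha)(a,b)=\bigwedge_{x\in X}\bigwedge_{b'\in B}\big[\delta^B_x(b,b')\to\bigvee_{a'\in A}\delta^A_x(a,a')\otimes\alpha(a',b')\big]$, $G(\alpha)(a,b)=\bigwedge_{x\in X}\bigwedge_{a'\in A}\big[\delta^A_x(a',a)\to\bigvee_{b'\in B}\alpha(a',b')\otimes\delta^B_x(b',b)\big]$, $G'(\alpha)(a,b)=\bigwedge_{x\in X}\bigwedge_{b'\in B}\big[\delta^B_x(b',b)\to\bigvee_{a'\in A}\delta^A_x(a',a)\otimes\alpha(a',b')\big]$; $\phi^{fs}=F$, $\phi^{bs}=G$, $\phi^{fb}=F\wedge F'$, $\phi^{bb}=G\wedge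 G'$, $\phi^{fbb}=F\wedge G'$, $\phi^{bfb}=G\wedge F'$. *)

theory Defs
  imports Main
begin

text \<open>The carrier is a type of class complete_lattice (0 = bot, 1 = top);
 the monoid operation m and residuum r are parameters.\<close>

definition complete_residuated_lattice ::
  "('l::complete_lattice \<Rightarrow> 'l \<Rightarrow> 'l) \<Rightarrow> ('l \<Rightarrow> 'l \<Rightarrow> 'l) \<Rightarrow> bool" where
  "complete_residuated_lattice m r \<longleftrightarrow>
     comm_monoid m top \<and> (\<forall>x y z. m x y \<le> z \<longleftrightarrow> x \<le> r y z)"

text \<open>Infinite distributivity conditions (over nonempty index families,
 represented by their sets of values).\<close>

definition inf_distributive :: "('l::complete_lattice \<Rightarrow> 'l \<Rightarrow> 'l) \<Rightarrow> bool" where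
  "inf_distributive m \<longleftrightarrow>
     (\<forall>(x::'l) (Y::'l set). Y \<noteq> {} \<longrightarrow>
        sup x (Inf Y) = (INF y\<in>Y. sup x y) \<and> m x (Inf Y) = (INF y\<in>Y. m x y))"

definition conv :: "('a \<Rightarrow> 'b \<Rightarrow> 'l) \<Rightarrow> 'b \<Rightarrow> 'a \<Rightarrow> 'l" where
  "conv \<phi> b a = \<phi> a b"

definition rcomp :: "('l::complete_lattice \<Rightarrow> 'l \<Rightarrow> 'l) \<Rightarrow>
    ('a \<Rightarrow> 'b \<Rightarrow> 'l) \<Rightarrow> ('b \<Rightarrow> 'c \<Rightarrow> 'l) \<Rightarrow> 'a \<Rightarrow> 'c \<Rightarrow> 'l" where
  "rcomp m \<phi> \<psi> a c = (SUP b. m (\<phi> a b) (\<psi> b c))"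

definition scomp :: "('l::complete_lattice \<Rightarrow> 'l \<Rightarrow> 'l) \<Rightarrow>
    ('a \<Rightarrow> 'l) \<Rightarrow> ('a \<Rightarrow> 'b \<Rightarrow> 'l) \<Rightarrow> 'b \<Rightarrow> 'l" where
  "scomp m f \<phi> b = (SUP a. m (f a) (\<phi> a b))"

definition compr :: "('l::complete_lattice \<Rightarrow> 'l \<Rightarrow> 'l) \<Rightarrow>
    ('a \<Rightarrow> 'b \<Rightarrow> 'l) \<Rightarrow> ('b \<Rightarrow> 'l) \<Rightarrow> 'a \<Rightarrow> 'l" where
  "compr m \<phi> g a = (SUP b. m (\<phi> a b) (g b))"

text \<open>States: a finite type 'a; alphabet: a finite type 'x.
 delta x a a' is the transition degree.\<close>
record ('x, 'a, 'l) fuzzy_automaton =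
  delta :: "'x \<Rightarrow> 'a \<Rightarrow> 'a \<Rightarrow> 'l"
  sigma :: "'a \<Rightarrow> 'l"
  tau   :: "'a \<Rightarrow> 'l"

datatype simtype = FS | BS | FB | BB | FBB | BFB

definition cond1 :: "('l::complete_lattice \<Rightarrow> 'l \<Rightarrow> 'l) \<Rightarrow> simtype \<Rightarrow>
    ('x, 'a, 'l) fuzzy_automaton \<Rightarrow> ('x, 'b, 'l) fuzzy_automaton \<Rightarrow> ('a \<Rightarrow> 'b \<Rightarrow> 'l) \<Rightarrow> bool" where
  "cond1 m w A B \<phi> = (case w of
     FS \<Rightarrow> sigma A \<le> scomp m (sigma B) (conv \<phi>)
   | BS \<Rightarrow> tau A \<le> compr m \<phi> (tau B)
   | FB \<Rightarrow> sigma A \<le> scomp m (sigma B) (conv \<phi>) \<and> sigma B \<le> scomp m (sigma A) \<phi>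
   | BB \<Rightarrow> tau A \<le> compr m \<phi> (tau B) \<and> tau B \<le> compr m (conv \<phi>) (tau A)
   | FBB \<Rightarrow> sigma A \<le> scomp m (sigma B) (conv \<phi>) \<and> tau B \<le> compr m (conv \<phi>) (tau A)
   | BFB \<Rightarrow> sigma B \<le> scomp m (sigma A) \<phi> \<and> tau A \<le> compr m \<phi> (tau B))"

definition cond2 :: "('l::complete_lattice \<Rightarrow> 'l \<Rightarrow> 'l) \<Rightarrow> simtype \<Rightarrow>
    ('x, 'a, 'l) fuzzy_automaton \<Rightarrow> ('x, 'b, 'l) fuzzy_automaton \<Rightarrow> ('a \<Rightarrow> 'b \<Rightarrow> 'l) \<Rightarrow> bool" where
  "cond2 m w A B \<phi> = (\<forall>x. case w of
     FS \<Rightarrow> rcomp m (conv \<phi>) (delta A x) \<le> rcomp m (delta B x) (conv \<phi>)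
   | BS \<Rightarrow> rcomp m (delta A x) \<phi> \<le> rcomp m \<phi> (delta B x)
   | FB \<Rightarrow> rcomp m (conv \<phi>) (delta A x) \<le> rcomp m (delta B x) (conv \<phi>)
           \<and> rcomp m \<phi> (delta B x) \<le> rcomp m (delta A x) \<phi>
   | BB \<Rightarrow> rcomp m (delta A x) \<phi> \<le> rcomp m \<phi> (delta B x)
           \<and> rcomp m (delta B x) (conv \<phi>) \<le> rcomp m (conv \<phi>) (delta A x)
   | FBB \<Rightarrow> rcomp m (conv \<phi>) (delta A x) = rcomp m (delta B x) (conv \<phi>)
   | BFB \<Rightarrow> rcomp m (delta A x) \<phi> = rcomp m \<phi> (delta B x))"

definition cond3 :: "('l::complete_lattice \<Rightarrow> 'l \<Rightarrow> 'l) \<Rightarrow> simtype \<Rightarrow>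
    ('x, 'a, 'l) fuzzy_automaton \<Rightarrow> ('x, 'b, 'l) fuzzy_automaton \<Rightarrow> ('a \<Rightarrow> 'b \<Rightarrow> 'l) \<Rightarrow> bool" where
  "cond3 m w A B \<phi> = (case w of
     FS \<Rightarrow> compr m (conv \<phi>) (tau A) \<le> tau B
   | BS \<Rightarrow> scomp m (sigma A) \<phi> \<le> sigma B
   | FB \<Rightarrow> compr m (conv \<phi>) (tau A) \<le> tau B \<and> compr m \<phi> (tau B) \<le> tau A
   | BB \<Rightarrow> scomp m (sigma A) \<phi> \<le> sigma B \<and> scomp m (sigma B) (conv \<phi>) \<le> sigma A
   | FBB \<Rightarrow> scomp m (sigma B) (conv \<phi>) \<le> sigma A \<and> compr m (conv \<phi>) (tau A) \<le> tau B
   | BFB \<Rightarrow> scomp m (sigma A) \<phi> \<le> sigma B \<and> compr m \<phi> (tau B) \<le> tau A)"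

definition psi :: "('l::complete_lattice \<Rightarrow> 'l \<Rightarrow> 'l) \<Rightarrow> simtype \<Rightarrow>
    ('x, 'a, 'l) fuzzy_automaton \<Rightarrow> ('x, 'b, 'l) fuzzy_automaton \<Rightarrow> 'a \<Rightarrow> 'b \<Rightarrow> 'l" where
  "psi r w A B a b = (case w of
     FS \<Rightarrow> r (tau A a) (tau B b)
   | BS \<Rightarrow> r (sigma A a) (sigma B b)
   | FB \<Rightarrow> inf (r (tau A a) (tau B b)) (r (tau B b) (tau A a))
   | BB \<Rightarrow> inf (r (sigma A a) (sigma B b)) (r (sigma B b) (sigma A a))
   | FBB \<Rightarrow> inf (r (tau A a) (tau B b)) (r (sigma B b) (sigma A a))
   | BFB \<Rightarrow> inf (r (sigma A a) (sigma B b)) (r (tau B b) (tau A a)))"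

definition opF :: "('l::complete_lattice \<Rightarrow> 'l \<Rightarrow> 'l) \<Rightarrow> ('l \<Rightarrow> 'l \<Rightarrow> 'l) \<Rightarrow>
    ('x, 'a, 'l) fuzzy_automaton \<Rightarrow> ('x, 'b, 'l) fuzzy_automaton \<Rightarrow> ('a \<Rightarrow> 'b \<Rightarrow> 'l) \<Rightarrow> 'a \<Rightarrow> 'b \<Rightarrow> 'l" where
  "opF m r A B \<alpha> a b = (INF x. INF a'. r (delta A x a a') (SUP b'. m (delta B x b b') (\<alpha> a' b')))"

definition opF' :: "('l::complete_lattice \<Rightarrow> 'l \<Rightarrow> 'l) \<Rightarrow> ('l \<Rightarrow> 'l \<Rightarrow> 'l) \<Rightarrow>
    ('x, 'a, 'l) fuzzy_automaton \<Rightarrow> ('x, 'b, 'l) fuzzy_automaton \<Rightarrow> ('a \<Rightarrow> 'b \<Rightarrow> 'l) \<Rightarrow> 'a \<Rightarrow> 'b \<Rightarrow> 'l" where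
  "opF' m r A B \<alpha> a b = (INF x. INF b'. r (delta B x b b') (SUP a'. m (delta A x a a') (\<alpha> a' b')))"

definition opG :: "('l::complete_lattice \<Rightarrow> 'l \<Rightarrow> 'l) \<Rightarrow> ('l \<Rightarrow> 'l \<Rightarrow> 'l) \<Rightarrow>
    ('x, 'a, 'l) fuzzy_automaton \<Rightarrow> ('x, 'b, 'l) fuzzy_automaton \<Rightarrow> ('a \<Rightarrow> 'b \<Rightarrow> 'l) \<Rightarrow> 'a \<Rightarrow> 'b \<Rightarrow> 'l" where
  "opG m r A B \<alpha> a b = (INF x. INF a'. r (delta A x a' a) (SUP b'. m (\<alpha> a' b') (delta B x b' b)))"

definition opG' :: "('l::complete_lattice \<Rightarrow> 'l \<Rightarrow> 'l) \<Rightarrow> ('l \<Rightarrow> 'l \<Rightarrow> 'l) \<Rightarrow>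
    ('x, 'a, 'l) fuzzy_automaton \<Rightarrow> ('x, 'b, 'l) fuzzy_automaton \<Rightarrow> ('a \<Rightarrow> 'b \<Rightarrow> 'l) \<Rightarrow> 'a \<Rightarrow> 'b \<Rightarrow> 'l" where
  "opG' m r A B \<alpha> a b = (INF x. INF b'. r (delta B x b' b) (SUP a'. m (delta A x a' a) (\<alpha> a' b')))"

definition phi :: "('l::complete_lattice \<Rightarrow> 'l \<Rightarrow> 'l) \<Rightarrow> ('l \<Rightarrow> 'l \<Rightarrow> 'l) \<Rightarrow> simtype \<Rightarrow>
    ('x, 'a, 'l) fuzzy_automaton \<Rightarrow> ('x, 'b, 'l) fuzzy_automaton \<Rightarrow> ('a \<Rightarrow> 'b \<Rightarrow> 'l) \<Rightarrow> 'a \<Rightarrow> 'b \<Rightarrow> 'l" where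
  "phi m r w A B \<alpha> = (case w of
     FS \<Rightarrow> opF m r A B \<alpha>
   | BS \<Rightarrow> opG m r A B \<alpha>
   | FB \<Rightarrow> inf (opF m r A B \<alpha>) (opF' m r A B \<alpha>)
   | BB \<Rightarrow> inf (opG m r A B \<alpha>) (opG' m r A B \<alpha>)
   | FBB \<Rightarrow> inf (opF m r A B \<alpha>) (opG' m r A B \<alpha>)
   | BFB \<Rightarrow> inf (opG m r A B \<alpha>) (opF' m r A B \<alpha>))"

text \<open>phi_seq k is the paper's phi_(k+1): phi_1 = psi^w, phi_(k+1) = phi_k meet phi^w(phi_k).\<close>
fun phi_seq :: "('l::complete_lattice \<Rightarrow> 'l \<Rightarrow> 'l) \<Rightarrow> ('l \<Rightarrow> 'l \<Rightarrow> 'l) \<Rightarrow> simtype \<Rightarrow>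
    ('x, 'a, 'l) fuzzy_automaton \<Rightarrow> ('x, 'b, 'l) fuzzy_automaton \<Rightarrow> nat \<Rightarrow> 'a \<Rightarrow> 'b \<Rightarrow> 'l" where
  "phi_seq m r w A B 0 = psi r w A B"
| "phi_seq m r w A B (Suc k) = inf (phi_seq m r w A B k) (phi m r w A B (phi_seq m r w A B k))"

end

theory Submission
  imports Defs "HOL-Library.Order_Continuity"
begin

(* By residuation, conditions (w-3) and (w-2) on a fuzzy relation alpha say exactly
   alpha \<le> psi^w and alpha \<le> phi^w(alpha), so part (a) asks for the greatest post-fixed point of
   phi^w below psi^w.  The sequence phi_k is the standard descending approximation of that point,
   and it converges to it as soon as phi^w is continuous along descending chains, i.e.
   inf_continuous in the sense of the library.  Continuity is established compositionally: the
   residuum y \<rightarrow> _ preserves all meets, x \<otimes> _ and x \<or> _ preserve meets of chains by the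
   distributivity hypotheses, finite joins and arbitrary meets of continuous maps are continuous,
   and F, F', G, G' are built from these pieces (finiteness of the state sets is used for the
   joins).  Part (b) is then immediate and part (c) follows because (w-1) is upward closed. *)

lemma greatest_post_fixpoint_below:
  fixes F :: "'a::complete_lattice \<Rightarrow> 'a" and S :: "nat \<Rightarrow> 'a"
  assumes cont: "inf_continuous F"
    and S_0: "S 0 = p" and S_Suc: "\<And>k. S (Suc k) = inf (S k) (F (S k))"
  shows "(INF k. S k) \<le> p"
    and "(INF k. S k) \<le> F (INF k. S k)"
    and "\<And>x. x \<le> p \<Longrightarrow> x \<le> F x \<Longrightarrow> x \<le> (INF k. S k)"
proof -
  show "(INF k. S k) \<le> p"
    using INF_lower[of 0 UNIV S] S_0 by simp
  have "antimono S"
    by (simp add: antimono_iff_le_Suc S_Suc)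
  have "(INF k. S k) \<le> (INF k. S (Suc k))"
    by (rule INF_mono) blast
  also have "\<dots> \<le> (INF k. F (S k))"
    by (rule INF_mono) (use S_Suc in \<open>auto intro: le_infI2\<close>)
  also have "\<dots> = F (INF k. S k)"
    using inf_continuousD[OF cont \<open>antimono S\<close>] by simp
  finally show "(INF k. S k) \<le> F (INF k. S k)" .
  fix x assume below: "x \<le> p" and post: "x \<le> F x"
  have "x \<le> S k" for k
  proof (induction k)
    case 0 then show ?case using below S_0 by simp
  next
    case (Suc k)
    have "x \<le> F (S k)"
      using post monoD[OF inf_continuous_mono[OF cont] Suc.IH] by (rule order_trans)
    with Suc.IH show ?case by (simp add: S_Suc)
  qed
  then show "x \<le> (INF k. S k)" by (rule INF_greatest)
qed

lemma inf_continuous_INF: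
  fixes F :: "'i \<Rightarrow> 'a::complete_lattice \<Rightarrow> 'b::complete_lattice"
  assumes "\<And>i. inf_continuous (F i)"
  shows "inf_continuous (\<lambda>x. INF i\<in>I. F i x)"
  unfolding inf_continuous_def
proof (intro allI impI)
  fix M :: "nat \<Rightarrow> 'a" assume "antimono M"
  then have "(INF i\<in>I. F i (INF k. M k)) = (INF i\<in>I. INF k. F i (M k))"
    using assms by (simp add: inf_continuousD)
  also have "\<dots> = (INF k. INF i\<in>I. F i (M k))"
    by (rule INF_commute)
  finally show "(INF i\<in>I. F i (INF k. M k)) = (INF k. INF i\<in>I. F i (M k))" .
qed

text \<open>For the pairwise case, the diagonal of the double meet
  \<open>INF i j. P (M i) \<squnion> Q (M j)\<close> is cofinal because both sequences descend.\<close>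

lemma inf_continuous_sup_distrib:
  fixes P Q :: "'a::complete_lattice \<Rightarrow> 'l::complete_lattice"
  assumes sup_INF: "\<And>(x::'l) (y::nat \<Rightarrow> 'l). sup x (INF k. y k) = (INF k. sup x (y k))"
    and P: "inf_continuous P" and Q: "inf_continuous Q"
  shows "inf_continuous (\<lambda>x. sup (P x) (Q x))"
  unfolding inf_continuous_def
proof (intro allI impI)
  fix M :: "nat \<Rightarrow> 'a" assume M: "antimono M"
  have P_dec: "P (M j) \<le> P (M i)" and Q_dec: "Q (M j) \<le> Q (M i)" if "i \<le> j" for i j
    using that M inf_continuous_mono[OF P] inf_continuous_mono[OF Q]
    by (auto simp: antimono_def mono_def)
  have "sup (P (INF k. M k)) (Q (INF k. M k)) = sup (INF i. P (M i)) (INF j. Q (M j))"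
    by (simp add: inf_continuousD[OF P M] inf_continuousD[OF Q M])
  also have "\<dots> = (INF j. INF i. sup (P (M i)) (Q (M j)))"
    by (simp add: sup_INF sup_commute)
  also have "\<dots> = (INF k. sup (P (M k)) (Q (M k)))"
  proof (rule order.antisym)
    show "(INF j. INF i. sup (P (M i)) (Q (M j))) \<le> (INF k. sup (P (M k)) (Q (M k)))"
      by (intro INF_greatest) (meson INF_lower2 UNIV_I order_refl)
    show "(INF k. sup (P (M k)) (Q (M k))) \<le> (INF j. INF i. sup (P (M i)) (Q (M j)))"
    proof (intro INF_greatest)
      fix i j
      show "(INF k. sup (P (M k)) (Q (M k))) \<le> sup (P (M i)) (Q (M j))"
        by (rule INF_lower2[of "max i j"], simp, rule sup_mono[OF P_dec Q_dec]) simp_all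
    qed
  qed
  finally show "sup (P (INF k. M k)) (Q (INF k. M k)) = (INF k. sup (P (M k)) (Q (M k)))" .
qed

lemma inf_continuous_SUP_finite:
  fixes F :: "'i \<Rightarrow> 'a::complete_lattice \<Rightarrow> 'l::complete_lattice"
  assumes sup_INF: "\<And>(x::'l) (y::nat \<Rightarrow> 'l). sup x (INF k. y k) = (INF k. sup x (y k))"
    and "finite I" and "\<And>i. inf_continuous (F i)"
  shows "inf_continuous (\<lambda>x. SUP i\<in>I. F i x)"
  using \<open>finite I\<close>
proof (induction I rule: finite_induct)
  case empty
  show ?case by (simp add: inf_continuous_const)
next
  case (insert i I)
  then show ?case
    by (simp add: inf_continuous_sup_distrib[OF sup_INF] assms(3))
qed

lemma inf_continuous_eval2: "inf_continuous (\<lambda>\<alpha>::'a \<Rightarrow> 'b \<Rightarrow> 'l::complete_lattice. \<alpha> a b)"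
  by (simp add: inf_continuous_def image_comp)

context
  fixes m r :: "'l::complete_lattice \<Rightarrow> 'l \<Rightarrow> 'l"
  assumes crl: "complete_residuated_lattice m r"
begin

lemma mult_commute: "m x y = m y x"
  using crl unfolding complete_residuated_lattice_def
  by (metis abel_semigroup.commute comm_monoid.axioms(1))

lemma residuation: "m x y \<le> z \<longleftrightarrow> x \<le> r y z"
  using crl unfolding complete_residuated_lattice_def by blast

lemma mult_mono: "y \<le> y' \<Longrightarrow> m x y \<le> m x y'"
  by (metis residuation mult_commute order_refl order_trans)

text \<open>The residuum \<open>y \<rightarrow> _\<close> is a right adjoint, hence preserves all meets.\<close>

lemma residuum_INF: "r y (INF i\<in>I. z i) = (INF i\<in>I. r y (z i))"
proof (rule order.antisym)
  show "r y (INF i\<in>I. z i) \<le> (INF i\<in>I. r y (z i))"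
    by (intro INF_greatest, unfold residuation[symmetric])
       (meson INF_lower order_trans residuation order_refl)
  show "(INF i\<in>I. r y (z i)) \<le> r y (INF i\<in>I. z i)"
    unfolding residuation[symmetric]
    by (intro INF_greatest, unfold residuation) (rule INF_lower)
qed

lemma inf_continuous_residuum:
  "inf_continuous G \<Longrightarrow> inf_continuous (\<lambda>x. r y (G x))"
  by (simp add: inf_continuous_def residuum_INF image_comp)

lemma cond3_iff: "cond3 m w A B \<alpha> \<longleftrightarrow> \<alpha> \<le> psi r w A B"
  by (cases w)
    (auto simp: cond3_def psi_def le_fun_def compr_def scomp_def conv_def SUP_le_iff
      residuation[symmetric] mult_commute)

lemma cond2_iff: "cond2 m w A B \<alpha> \<longleftrightarrow> \<alpha> \<le> phi m r w A B \<alpha>"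
  by (cases w)
    (auto simp: cond2_def phi_def opF_def opF'_def opG_def opG'_def le_fun_def rcomp_def conv_def
      SUP_le_iff le_INF_iff residuation[symmetric] order.eq_iff mult_commute)

text \<open>The conditions (w-1) are upward closed, since compositions are monotone.\<close>

lemma scomp_mono: "\<phi> \<le> \<psi> \<Longrightarrow> scomp m f \<phi> \<le> scomp m f \<psi>"
  unfolding scomp_def le_fun_def by (auto intro!: SUP_mono' mult_mono)

lemma compr_mono: "\<phi> \<le> \<psi> \<Longrightarrow> compr m \<phi> g \<le> compr m \<psi> g"
  unfolding compr_def le_fun_def by (auto intro!: SUP_mono' simp: mult_commute[of _ "g _"] mult_mono)

lemma conv_mono: "\<phi> \<le> \<psi> \<Longrightarrow> conv \<phi> \<le> conv \<psi>"
  unfolding conv_def le_fun_def by auto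

lemma cond1_mono: "\<phi> \<le> \<psi> \<Longrightarrow> cond1 m w A B \<phi> \<Longrightarrow> cond1 m w A B \<psi>"
  unfolding cond1_def
  by (cases w) (auto intro: order_trans[OF _ scomp_mono] order_trans[OF _ compr_mono] conv_mono)

context
  assumes dist: "inf_distributive m"
begin

lemma sup_INF_seq: "sup (x::'l) (INF k::nat. y k) = (INF k. sup x (y k))"
  using dist[unfolded inf_distributive_def, rule_format, of "range y" x] by (simp add: image_comp)

lemma mult_INF_seq: "m (x::'l) (INF k::nat. y k) = (INF k. m x (y k))"
  using dist[unfolded inf_distributive_def, rule_format, of "range y" x] by (simp add: image_comp)

lemma inf_continuous_mult:
  "inf_continuous G \<Longrightarrow> inf_continuous (\<lambda>\<alpha>. m y (G \<alpha>))"
  "inf_continuous G \<Longrightarrow> inf_continuous (\<lambda>\<alpha>. m (G \<alpha>) y)"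
  by (simp_all add: inf_continuous_def mult_INF_seq mult_commute[of _ y] image_comp)

text \<open>Finiteness of the state types is needed for the joins.\<close>

lemmas inf_continuous_building_blocks =
  inf_continuous_fun inf_continuous_INF inf_continuous_residuum
  inf_continuous_SUP_finite[OF sup_INF_seq finite_UNIV] inf_continuous_mult inf_continuous_eval2

lemma inf_continuous_phi:
  fixes A :: "('x, 'a::finite, 'l) fuzzy_automaton" and B :: "('x, 'b::finite, 'l) fuzzy_automaton"
  shows "inf_continuous (phi m r w A B)"
proof -
  have "inf_continuous (opF m r A B)" "inf_continuous (opF' m r A B)"
    "inf_continuous (opG m r A B)" "inf_continuous (opG' m r A B)"
    unfolding opF_def opF'_def opG_def opG'_def
    by (intro inf_continuous_building_blocks)+
  then show ?thesis
    by (cases w) (auto simp: phi_def[abs_def] intro: inf_continuous_inf)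
qed

end

end

theorem theorem5p4:
  fixes m r :: "'l::complete_lattice \<Rightarrow> 'l \<Rightarrow> 'l"
    and w :: simtype
    and A :: "('x::finite, 'a::finite, 'l) fuzzy_automaton"
    and B :: "('x, 'b::finite, 'l) fuzzy_automaton"
  assumes "complete_residuated_lattice m r"
    and "inf_distributive m"
  defines "\<Phi> \<equiv> (INF k. phi_seq m r w A B k)"
  shows "(cond2 m w A B \<Phi> \<and> cond3 m w A B \<Phi> \<and>
          (\<forall>\<alpha>. cond2 m w A B \<alpha> \<and> cond3 m w A B \<alpha> \<longrightarrow> \<alpha> \<le> \<Phi>))
       \<and> (cond1 m w A B \<Phi> \<longrightarrow>
          cond1 m w A B \<Phi> \<and> cond2 m w A B \<Phi> \<and> cond3 m w A B \<Phi> \<and>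
          (\<forall>\<alpha>. cond1 m w A B \<alpha> \<and> cond2 m w A B \<alpha> \<and> cond3 m w A B \<alpha> \<longrightarrow> \<alpha> \<le> \<Phi>))
       \<and> (\<not> cond1 m w A B \<Phi> \<longrightarrow>
          \<not> (\<exists>\<alpha>. cond1 m w A B \<alpha> \<and> cond2 m w A B \<alpha> \<and> cond3 m w A B \<alpha>))"
proof -
  note crl = assms(1)
  have "inf_continuous (phi m r w A B)"
    by (rule inf_continuous_phi[OF crl assms(2)])
  note limit = greatest_post_fixpoint_below[OF this, of "phi_seq m r w A B" "psi r w A B",
      folded \<Phi>_def, simplified]
  have greatest: "cond2 m w A B \<Phi>" "cond3 m w A B \<Phi>"
    "\<And>\<alpha>. cond2 m w A B \<alpha> \<Longrightarrow> cond3 m w A B \<alpha> \<Longrightarrow> \<alpha> \<le> \<Phi>"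
    using limit by (simp_all add: cond2_iff[OF crl] cond3_iff[OF crl])
  \<comment> \<open>Part (c): any solution of (w-1)--(w-3) lies below \<Phi>, and (w-1) is upward closed.\<close>
  have "\<not> cond1 m w A B \<alpha>" if "\<not> cond1 m w A B \<Phi>" "cond2 m w A B \<alpha>" "cond3 m w A B \<alpha>" for \<alpha>
    using that greatest(3) cond1_mono[OF crl] by blast
  then show ?thesis
    using greatest by blast
qed

end
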